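(* Let $\mathcal T\in\Sigma^n$ be a text. The permutations $\pi,\bar\pi$ defined as $\pi(i)=\mathrm{ISA}[i]$ and $\bar\pi(i)=n-\mathrm{ISA}[i]+1$ for $i\in[n]$ are order-preserving for $\mathcal T$. Furthermore, $|\mathtt{st\text{-}lex}^-|\le r$ and $|\mathtt{st\text{-}lex}^+|\le r$.
   Context: A text is a string $\mathcal T\in\Sigma^n$ over an integer alphabet whose last symbol $\mathcal T[n]=\$$ occurs only there and is smallest. $\mathrm{ISA}[i]$ is the rank of the suffix $\mathcal T[i,n]$ among all suffixes of $\mathcal T$ in lexicographic order. A permutation $\pi:[n]\to[n]$ is order-preserving for $\mathcal T$ if for all $i,j\in[n-1]$, $\pi(i)<\pi(j)$ and $\mathcal T[i,i+1]=\mathcal T[j,j+1]$ imply $\pi(i+1)<\pi(j+1)$. For $i\ne j$, $\mathrm{rlce}(i,j)$ is the length of the longest common prefix of $\mathcal T[i,n]$ and $\mathcal T[j,n]$; $\mathrm{LPF}_\pi[i]=0$ if $\pi(i)=1$, else $\mathrm{LPF}_\pi[i]=\max_{\pi(j)<\pi(i)}\mathrm{rlce}(j,i)$; $\mathrm{PDA}_\pi$ is the set $\{i+\mathrm{LPF}_\pi[i]:i\in[n]\}$ sorted colexicographically by the prefixes $\mathcal T[1,j]$. $\mathtt{st\text{-}lex}^-=\mathrm{PDA}_\pi$ and $\mathtt{st\text{-}lex}^+=\mathrm{PDA}_{\bar\pi}$. $r$ is the number of maximal equal-letter runs in $\mathrm{BWT}(\mathcal T)$, obtained by sorting all rotations of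 $\mathcal T$ lexicographically and concatenating their last characters. *)

theory Defs
  imports Main "HOL-Library.List_Lexorder"
begin

text \<open>A text is a list T of naturals (integer alphabet), positions are 1-based:
  T[i] = T ! (i - 1), the suffix T[i,n] = drop (i - 1) T.
  Lists are compared lexicographically (List_Lexorder; a proper prefix is smaller).\<close>

definition is_text :: "nat list \<Rightarrow> bool" where
  "is_text T \<longleftrightarrow> T \<noteq> [] \<and> (\<forall>i < length T - 1. T ! i > last T)"

definition chr :: "nat list \<Rightarrow> nat \<Rightarrow> nat" where
  "chr T i = T ! (i - 1)"

definition suf :: "nat list \<Rightarrow> nat \<Rightarrow> nat list" where
  "suf T i = drop (i - 1) T"

definition ISA :: "nat list \<Rightarrow> nat \<Rightarrow> nat" where
  "ISA T i = card {j \<in> {1..length T}. suf T j < suf T i} + 1"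

definition order_preserving :: "nat list \<Rightarrow> (nat \<Rightarrow> nat) \<Rightarrow> bool" where
  "order_preserving T \<pi> \<longleftrightarrow> bij_betw \<pi> {1..length T} {1..length T} \<and>
     (\<forall>i \<in> {1..length T - 1}. \<forall>j \<in> {1..length T - 1}.
        \<pi> i < \<pi> j \<and> chr T i = chr T j \<and> chr T (i+1) = chr T (j+1) \<longrightarrow> \<pi> (i+1) < \<pi> (j+1))"

fun lcp :: "'a list \<Rightarrow> 'a list \<Rightarrow> nat" where
  "lcp (x#xs) (y#ys) = (if x = y then Suc (lcp xs ys) else 0)"
| "lcp _ _ = 0"

definition rlce :: "nat list \<Rightarrow> nat \<Rightarrow> nat \<Rightarrow> nat" where
  "rlce T i j = lcp (suf T i) (suf T j)"

definition LPF :: "nat list \<Rightarrow> (nat \<Rightarrow> nat) \<Rightarrow> nat \<Rightarrow> nat" where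
  "LPF T \<pi> i = (if \<pi> i = 1 then 0
     else Max {rlce T j i | j. j \<in> {1..length T} \<and> \<pi> j < \<pi> i})"

text \<open>The set underlying PDA; its colexicographic sorting does not affect its size.\<close>
definition PDA :: "nat list \<Rightarrow> (nat \<Rightarrow> nat) \<Rightarrow> nat set" where
  "PDA T \<pi> = {i + LPF T \<pi> i | i. i \<in> {1..length T}}"

definition BWT :: "nat list \<Rightarrow> nat list" where
  "BWT T = map last (sorted_list_of_set {rotate k T | k. k < length T})"

definition runs :: "'a list \<Rightarrow> nat" where
  "runs L = (if L = [] then 0 else Suc (card {k. Suc k < length L \<and> L ! k \<noteq> L ! Suc k}))"

end

theory Submission
  imports Defs
begin

text \<open>Both \<open>\<pi>\<close> and \<open>\<pi>bar\<close> rank the suffixes of \<open>T\<close>, along the lexicographic order and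
  its converse respectively. Both orders are invariant under prepending a common letter, which
  gives order preservation, and both have the betweenness property of longest common prefixes,
  so \<open>LPF\<^sub>\<pi>[i]\<close> is attained at the \<open>\<pi>\<close>-predecessor of \<open>i\<close>. Hence, whenever the predecessor
  of \<open>i + 1\<close> is preceded by the same letter as \<open>i + 1\<close>, we get
  \<open>LPF\<^sub>\<pi>[i] = LPF\<^sub>\<pi>[i + 1] + 1\<close> and \<open>i\<close>, \<open>i + 1\<close> contribute the same element to \<open>PDA\<^sub>\<pi>\<close>.
  The remaining positions are mapped injectively to the starts of runs of the BWT (read
  backwards for \<open>\<pi>bar\<close>), so there are at most \<open>r\<close> of them.\<close>

lemma lcp_sym: "lcp xs ys = lcp ys xs"
  by (induction xs ys rule: lcp.induct) auto

lemma lcp_le_if_between: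
  fixes a b c :: "'a::linorder list"
  assumes "a \<le> b" "b \<le> c"
  shows "lcp a c \<le> lcp b c \<and> lcp a c \<le> lcp a b"
  using assms
proof (induction a arbitrary: b c)
  case Nil
  then show ?case by (cases c) auto
next
  case (Cons x a)
  show ?case
  proof (cases b)
    case (Cons y b')
    show ?thesis
    proof (cases c)
      case (Cons z c')
      show ?thesis
      proof (cases "x = z")
        case True
        then have "y = x" "a \<le> b'" "b' \<le> c'"
          using Cons.prems \<open>b = y # b'\<close> \<open>c = z # c'\<close> by auto
        then show ?thesis
          using Cons.IH[of b' c'] \<open>b = y # b'\<close> \<open>c = z # c'\<close> True by auto
      qed (simp add: \<open>c = z # c'\<close>)
    qed simp
  qed (use Cons.prems in simp)
qed

lemma append_less_append_if_not_prefix: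
  fixes u w :: "'a::linorder list"
  assumes "u < w" and "\<And>a x. w \<noteq> u @ a # x"
  shows "u @ v < w @ z"
proof -
  obtain p a b x y where "a < b" "u = p @ a # x" "w = p @ b # y"
    using assms unfolding list_less_def lexord_def by blast
  then show ?thesis by (simp add: list_less_def lexord_append_left_rightI)
qed

lemma card_less_nth_sorted:
  fixes xs :: "'a::linorder list"
  assumes sorted: "sorted_wrt (<) xs" and k: "k < length xs"
  shows "card {y \<in> set xs. y < xs ! k} = k"
proof -
  have "{y \<in> set xs. y < xs ! k} = (!) xs ` {..<k}"
  proof (intro set_eqI iffI)
    fix y assume "y \<in> {y \<in> set xs. y < xs ! k}"
    then obtain i where "i < length xs" "y = xs ! i" "xs ! i < xs ! k"
      by (auto simp: in_set_conv_nth)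
    moreover have "\<not> k \<le> i"
      using sorted calculation by (metis le_neq_implies_less not_less_iff_gr_or_eq sorted_wrt_nth_less)
    ultimately show "y \<in> (!) xs ` {..<k}" by auto
  qed (use sorted k in \<open>auto simp: sorted_wrt_iff_nth_less\<close>)
  moreover have "inj_on ((!) xs) {..<k}"
    using sorted k by (intro inj_on_nth) (auto simp: strict_sorted_iff)
  ultimately show ?thesis by (simp add: card_image)
qed

lemma card_run_starts:
  "card {k. k < length L \<and> (k = 0 \<or> L ! (k - 1) \<noteq> L ! k)} = runs L"
proof (cases "L = []")
  case False
  define D where "D = {k. Suc k < length L \<and> L ! k \<noteq> L ! Suc k}"
  have "k \<in> Suc ` D \<longleftrightarrow> 0 < k \<and> k < length L \<and> L ! (k - 1) \<noteq> L ! k" for k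
    by (cases k) (auto simp: D_def)
  then have "{k. k < length L \<and> (k = 0 \<or> L ! (k - 1) \<noteq> L ! k)} = insert 0 (Suc ` D)"
    using False by auto
  moreover have "finite D"
    unfolding D_def by (rule finite_subset[of _ "{..<length L}"]) auto
  ultimately show ?thesis
    using False by (simp add: runs_def D_def card_image)
qed (simp add: runs_def)

lemma runs_rev: "runs (rev L) = runs L"
proof -
  let ?D = "\<lambda>L. {k. Suc k < length L \<and> L ! k \<noteq> L ! Suc k}"
  have "bij_betw (\<lambda>k. length L - 2 - k) (?D L) (?D (rev L))"
  proof (rule bij_betw_byWitness[where f' = "\<lambda>k. length L - 2 - k"])
    have "rev L ! (length L - 2 - k) = L ! Suc k" "rev L ! Suc (length L - 2 - k) = L ! k"
      if "Suc k < length L" for k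
      using that by (simp_all add: rev_nth Suc_diff_Suc)
    then show "(\<lambda>k. length L - 2 - k) ` ?D L \<subseteq> ?D (rev L)"
      by auto
    have "rev L ! k = L ! Suc (length L - 2 - k)" "rev L ! Suc k = L ! (length L - 2 - k)"
      if "Suc k < length L" for k
      using that by (simp_all add: rev_nth Suc_diff_Suc)
    then show "(\<lambda>k. length L - 2 - k) ` ?D (rev L) \<subseteq> ?D L"
      by auto
  qed (simp_all add: Suc_diff_Suc)
  then show ?thesis
    unfolding runs_def by (simp add: bij_betw_same_card)
qed

text \<open>For \<open>\<rho> = ISA T\<close> and \<open>c = prev_chr T\<close>, the breaks are the suffixes whose BWT letter
  starts a run.\<close>

definition breaks :: "'a set \<Rightarrow> ('a \<Rightarrow> nat) \<Rightarrow> ('a \<Rightarrow> 'b) \<Rightarrow> 'a set" where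
  "breaks A \<rho> c = {i \<in> A. \<forall>j \<in> A. \<rho> j + 1 = \<rho> i \<longrightarrow> c j \<noteq> c i}"

lemma card_breaks_le_runs:
  assumes bij: "bij_betw \<rho> A {1..length L}" and L: "\<And>i. i \<in> A \<Longrightarrow> L ! (\<rho> i - 1) = c i"
  shows "card (breaks A \<rho> c) \<le> runs L"
proof -
  let ?S = "{k. k < length L \<and> (k = 0 \<or> L ! (k - 1) \<noteq> L ! k)}"
  have "\<rho> i - 1 \<in> ?S" if i: "i \<in> breaks A \<rho> c" for i
  proof -
    have "i \<in> A" using i by (simp add: breaks_def)
    then have \<rho>i: "\<rho> i \<in> {1..length L}" using bij by (auto simp: bij_betw_def)
    show ?thesis
    proof (cases "\<rho> i = 1")
      case True
      then show ?thesis using \<rho>i by auto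
    next
      case False
      then have "\<rho> i - 1 \<in> \<rho> ` A" using \<rho>i bij by (auto simp: bij_betw_def)
      then obtain j where j: "j \<in> A" "\<rho> j = \<rho> i - 1" by (metis imageE)
      then have "c j \<noteq> c i" using i \<rho>i False by (auto simp: breaks_def)
      then have "L ! (\<rho> j - 1) \<noteq> L ! (\<rho> i - 1)" using L j(1) \<open>i \<in> A\<close> by simp
      moreover have "\<rho> j - 1 = \<rho> i - 1 - 1" using j by simp
      ultimately show ?thesis using \<rho>i by auto
    qed
  qed
  then have image_sub: "(\<lambda>i. \<rho> i - 1) ` breaks A \<rho> c \<subseteq> ?S" by (rule image_subsetI)
  have "inj_on (\<lambda>i. \<rho> i - 1) A"
    using bij comp_inj_on[of \<rho> A "\<lambda>k. k - 1"] inj_on_diff_nat[of "\<rho> ` A" 1]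
    by (auto simp: bij_betw_def comp_def)
  then have "inj_on (\<lambda>i. \<rho> i - 1) (breaks A \<rho> c)"
    by (rule inj_on_subset) (auto simp: breaks_def)
  then have "card (breaks A \<rho> c) = card ((\<lambda>i. \<rho> i - 1) ` breaks A \<rho> c)"
    by (rule card_image[symmetric])
  also have "\<dots> \<le> card ?S"
    using image_sub by (rule card_mono[rotated]) (rule finite_subset[of _ "{..<length L}"], auto)
  also have "\<dots> = runs L"
    by (rule card_run_starts)
  finally show ?thesis .
qed

text \<open>The letter cyclically preceding position \<open>i\<close>: the BWT letter in the row of suffix \<open>i\<close>.\<close>

definition prev_chr :: "nat list \<Rightarrow> nat \<Rightarrow> nat" where
  "prev_chr T i = (if i = 1 then last T else chr T (i - 1))"

locale sentinel_text =
  fixes T :: "nat list"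
  assumes is_text: "is_text T"
begin

lemma T_not_Nil: "T \<noteq> []"
  using is_text by (simp add: is_text_def)

lemma chr_ne_last:
  assumes "1 \<le> i" "i < length T"
  shows "chr T i \<noteq> last T"
proof -
  have "i - 1 < length T - 1" using assms by arith
  then have "last T < T ! (i - 1)" using is_text by (simp add: is_text_def)
  then show ?thesis by (simp add: chr_def)
qed

lemma prev_chr_eq_last_iff:
  assumes "i \<in> {1..length T}"
  shows "prev_chr T i = last T \<longleftrightarrow> i = 1"
proof (cases "i = 1")
  case False
  then have "chr T (i - 1) \<noteq> last T" using assms by (intro chr_ne_last) auto
  then show ?thesis using False by (simp add: prev_chr_def)
qed (simp add: prev_chr_def)

lemma last_notin_butlast_suf: "last T \<notin> set (butlast (suf T i))"
proof -
  have "last T \<notin> set (butlast T)"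
    using is_text by (auto simp: is_text_def in_set_conv_nth nth_butlast)
  then show ?thesis
    by (metis butlast_drop in_set_dropD suf_def)
qed

lemma last_in_suf:
  assumes "i \<in> {1..length T}"
  shows "last T \<in> set (suf T i)"
proof -
  have "i - 1 < length T" using assms by auto
  then have "suf T i \<noteq> []" "last (suf T i) = last T" by (simp_all add: suf_def last_drop)
  then show ?thesis by (metis last_in_set)
qed

lemma suf_Cons: "1 \<le> i \<Longrightarrow> i < length T \<Longrightarrow> suf T i = chr T i # suf T (i + 1)"
  unfolding suf_def chr_def using Cons_nth_drop_Suc[of "i - 1" T] by simp

lemma suf_length: "suf T (length T) = [last T]"
  using T_not_Nil by (induction T rule: rev_induct) (auto simp: suf_def)

lemma inj_on_suf: "inj_on (suf T) {1..length T}"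
proof (rule inj_onI)
  fix i j assume "i \<in> {1..length T}" "j \<in> {1..length T}" "suf T i = suf T j"
  moreover from this have "length T - (i - 1) = length T - (j - 1)"
    by (metis length_drop suf_def)
  ultimately show "i = j" by auto
qed

lemma suf_ne_suf_append_Cons: "i \<in> {1..length T} \<Longrightarrow> suf T j \<noteq> suf T i @ a # x"
  using last_in_suf[of i] last_notin_butlast_suf[of j] by (auto simp: butlast_append)

lemma rotate_eq_suf_append:
  assumes "i \<in> {1..length T}"
  shows "rotate (i - 1) T = suf T i @ take (i - 1) T"
proof -
  have "(i - 1) mod length T = i - 1" using assms by auto
  then show ?thesis by (simp add: rotate_drop_take suf_def)
qed

lemma rotate_less_if_suf_less:
  assumes "i \<in> {1..length T}" "j \<in> {1..length T}" "suf T i < suf T j"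
  shows "rotate (i - 1) T < rotate (j - 1) T"
  unfolding rotate_eq_suf_append[OF assms(1)] rotate_eq_suf_append[OF assms(2)]
  using assms(3) suf_ne_suf_append_Cons[OF assms(1)] by (rule append_less_append_if_not_prefix)

lemma rotate_less_iff:
  assumes "i \<in> {1..length T}" "j \<in> {1..length T}"
  shows "rotate (i - 1) T < rotate (j - 1) T \<longleftrightarrow> suf T i < suf T j"
proof
  assume rot: "rotate (i - 1) T < rotate (j - 1) T"
  show "suf T i < suf T j"
  proof (rule ccontr)
    assume "\<not> suf T i < suf T j"
    then consider "suf T j < suf T i" | "suf T i = suf T j" by fastforce
    then show False
    proof cases
      case 1
      then show False using rot rotate_less_if_suf_less[OF assms(2,1)] by simp
    next
      case 2
      then show False using rot inj_on_suf assms by (simp add: inj_on_eq_iff)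
    qed
  qed
qed (rule rotate_less_if_suf_less[OF assms])

lemma ISA_le_if_suf_le:
  assumes "suf T i \<le> suf T j"
  shows "ISA T i \<le> ISA T j"
  unfolding ISA_def using assms by (intro add_right_mono card_mono) auto

lemma ISA_less_if_suf_less:
  assumes "i \<in> {1..length T}" "suf T i < suf T j"
  shows "ISA T i < ISA T j"
proof -
  have "{k \<in> {1..length T}. suf T k < suf T i} \<subset> {k \<in> {1..length T}. suf T k < suf T j}"
    using assms by (auto dest: less_trans)
  then show ?thesis unfolding ISA_def by (simp add: psubset_card_mono)
qed

lemma ISA_less_iff:
  assumes "i \<in> {1..length T}" "j \<in> {1..length T}"
  shows "ISA T i < ISA T j \<longleftrightarrow> suf T i < suf T j"
proof
  assume "ISA T i < ISA T j"
  then have "\<not> suf T j \<le> suf T i" using ISA_le_if_suf_le[of j i] by auto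
  then show "suf T i < suf T j" by auto
qed (rule ISA_less_if_suf_less[OF assms(1)])

lemma ISA_in_range:
  assumes "i \<in> {1..length T}"
  shows "ISA T i \<in> {1..length T}"
proof -
  have "card {j \<in> {1..length T}. suf T j < suf T i} \<le> card ({1..length T} - {i})"
    by (intro card_mono) auto
  also have "\<dots> < length T"
    using assms by auto
  finally show ?thesis by (simp add: ISA_def)
qed

lemma bij_ISA: "bij_betw (ISA T) {1..length T} {1..length T}"
proof -
  have "inj_on (ISA T) {1..length T}"
  proof (rule inj_onI)
    fix i j assume ij: "i \<in> {1..length T}" "j \<in> {1..length T}" "ISA T i = ISA T j"
    then have "\<not> suf T i < suf T j" "\<not> suf T j < suf T i"
      using ISA_less_iff[OF ij(1,2)] ISA_less_iff[OF ij(2,1)] by auto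
    then have "suf T i = suf T j" by auto
    then show "i = j" using inj_on_suf ij by (simp add: inj_on_eq_iff)
  qed
  moreover have "ISA T ` {1..length T} \<subseteq> {1..length T}"
    using ISA_in_range by blast
  ultimately show ?thesis
    using endo_inj_surj[of "{1..length T}" "ISA T"] by (simp add: bij_betw_def)
qed

lemma rotations_eq_image: "{rotate k T | k. k < length T} = (\<lambda>i. rotate (i - 1) T) ` {1..length T}"
proof (intro set_eqI iffI)
  fix x assume "x \<in> {rotate k T | k. k < length T}"
  then obtain k where "k < length T" "x = rotate k T" by blast
  then show "x \<in> (\<lambda>i. rotate (i - 1) T) ` {1..length T}"
    by (intro image_eqI[of _ _ "k + 1"]) auto
qed force

lemma inj_on_rotate: "inj_on (\<lambda>i. rotate (i - 1) T) {1..length T}"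
proof (rule inj_onI)
  fix i j assume ij: "i \<in> {1..length T}" "j \<in> {1..length T}" "rotate (i - 1) T = rotate (j - 1) T"
  then have "\<not> suf T i < suf T j" "\<not> suf T j < suf T i"
    using rotate_less_iff[OF ij(1,2)] rotate_less_iff[OF ij(2,1)] by auto
  then have "suf T i = suf T j" by auto
  then show "i = j" using inj_on_suf ij by (simp add: inj_on_eq_iff)
qed

lemma length_BWT: "length (BWT T) = length T"
  using inj_on_rotate by (simp add: BWT_def rotations_eq_image card_image)

lemma last_rotate:
  assumes "i \<in> {1..length T}"
  shows "last (rotate (i - 1) T) = prev_chr T i"
proof (cases "i = 1")
  case False
  then have "take (i - 1) T \<noteq> []" "length (take (i - 1) T) = i - 1"
    using assms T_not_Nil by auto
  then have "last (rotate (i - 1) T) = last (take (i - 1) T)"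
    using rotate_eq_suf_append[OF assms] by simp
  also have "\<dots> = T ! (i - 1 - 1)"
    using \<open>take (i - 1) T \<noteq> []\<close> \<open>length (take (i - 1) T) = i - 1\<close> False assms
    by (auto simp: last_conv_nth simp del: length_take)
  finally show ?thesis
    using False by (simp add: prev_chr_def chr_def)
qed (simp add: prev_chr_def)

lemma BWT_nth_ISA:
  assumes i: "i \<in> {1..length T}"
  shows "BWT T ! (ISA T i - 1) = prev_chr T i"
proof -
  define rots where "rots = sorted_list_of_set {rotate k T | k. k < length T}"
  have rots: "sorted_wrt (<) rots" "set rots = {rotate k T | k. k < length T}"
    unfolding rots_def rotations_eq_image by simp_all
  then obtain k where k: "k < length rots" "rots ! k = rotate (i - 1) T"
    using i by (metis (no_types, lifting) imageI in_set_conv_nth rotations_eq_image)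
  have "{y \<in> set rots. y < rotate (i - 1) T}
      = (\<lambda>j. rotate (j - 1) T) ` {j \<in> {1..length T}. suf T j < suf T i}"
    using rots(2) rotate_less_iff i by (auto simp: rotations_eq_image)
  moreover have "inj_on (\<lambda>j. rotate (j - 1) T) {j \<in> {1..length T}. suf T j < suf T i}"
    using inj_on_rotate by (rule inj_on_subset) auto
  ultimately have "k = ISA T i - 1"
    using card_less_nth_sorted[OF rots(1) k(1)] k(2) by (simp add: ISA_def card_image)
  then show ?thesis
    using k last_rotate[OF i] by (simp add: BWT_def rots_def)
qed

lemma rlce_Cons:
  assumes "1 \<le> i" "i < length T" "1 \<le> j" "j < length T"
  shows "rlce T i j = (if chr T i = chr T j then Suc (rlce T (i + 1) (j + 1)) else 0)"
  using assms by (simp add: rlce_def suf_Cons)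

lemma rlce_length: "1 \<le> i \<Longrightarrow> i < length T \<Longrightarrow> rlce T (length T) i = 0"
  using chr_ne_last[of i] by (simp add: rlce_def suf_length suf_Cons)

end

locale suffix_ranking = sentinel_text +
  fixes \<rho> :: "nat \<Rightarrow> nat" and R :: "nat list \<Rightarrow> nat list \<Rightarrow> bool"
  assumes bij_rank: "bij_betw \<rho> {1..length T} {1..length T}"
    and rank_less_iff:
      "i \<in> {1..length T} \<Longrightarrow> j \<in> {1..length T} \<Longrightarrow> \<rho> i < \<rho> j \<longleftrightarrow> R (suf T i) (suf T j)"
    and R_Cons_iff: "R (x # xs) (x # ys) \<longleftrightarrow> R xs ys"
    and lcp_le_if_R_between: "R xs ys \<Longrightarrow> R ys zs \<Longrightarrow> lcp xs zs \<le> lcp ys zs"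
begin

lemma rank_in_range: "i \<in> {1..length T} \<Longrightarrow> \<rho> i \<in> {1..length T}"
  using bij_rank by (auto simp: bij_betw_def)

lemma rank_less_iff_rank_Suc_less:
  assumes "1 \<le> i" "i < length T" "1 \<le> j" "j < length T" "chr T i = chr T j"
  shows "\<rho> i < \<rho> j \<longleftrightarrow> \<rho> (i + 1) < \<rho> (j + 1)"
  using assms rank_less_iff[of i j] rank_less_iff[of "i + 1" "j + 1"]
  by (simp add: suf_Cons R_Cons_iff)

lemma order_preserving_rank: "order_preserving T \<rho>"
  unfolding order_preserving_def
proof (intro conjI bij_rank ballI impI)
  fix i j assume "i \<in> {1..length T - 1}" "j \<in> {1..length T - 1}"
    "\<rho> i < \<rho> j \<and> chr T i = chr T j \<and> chr T (i + 1) = chr T (j + 1)"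
  then show "\<rho> (i + 1) < \<rho> (j + 1)" using rank_less_iff_rank_Suc_less[of i j] by auto
qed

lemma LPF_eq_Max:
  assumes "\<rho> i \<noteq> 1"
  shows "LPF T \<rho> i = Max ((\<lambda>j. rlce T j i) ` {j \<in> {1..length T}. \<rho> j < \<rho> i})"
  using assms unfolding LPF_def by (auto intro!: arg_cong[where f = Max])

lemma rlce_le_LPF:
  assumes "j \<in> {1..length T}" "\<rho> j < \<rho> i"
  shows "rlce T j i \<le> LPF T \<rho> i"
proof -
  have "\<rho> i \<noteq> 1" using rank_in_range[OF assms(1)] assms(2) by auto
  then show ?thesis using assms by (simp add: LPF_eq_Max)
qed

lemma LPF_attained:
  assumes "i \<in> {1..length T}" "\<rho> i \<noteq> 1"
  obtains p where "p \<in> {1..length T}" "\<rho> p < \<rho> i" "LPF T \<rho> i = rlce T p i"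
proof -
  have "1 \<in> \<rho> ` {1..length T}" using bij_rank T_not_Nil by (simp add: bij_betw_def Suc_leI)
  then obtain q where "q \<in> {1..length T}" "\<rho> q < \<rho> i"
    using assms rank_in_range[OF assms(1)] by force
  then have "Max ((\<lambda>j. rlce T j i) ` {j \<in> {1..length T}. \<rho> j < \<rho> i})
      \<in> (\<lambda>j. rlce T j i) ` {j \<in> {1..length T}. \<rho> j < \<rho> i}"
    by (intro Max_in) auto
  then show ?thesis using that assms(2) by (auto simp: LPF_eq_Max)
qed

text \<open>The suffixes ranked before \<open>i\<close> lie, in the order \<open>R\<close>, before the immediate
  predecessor \<open>j\<close>, so none of them shares a longer prefix with suffix \<open>i\<close>.\<close>

lemma LPF_eq_rlce_pred:
  assumes i: "i \<in> {1..length T}" and j: "j \<in> {1..length T}" and pred: "\<rho> j + 1 = \<rho> i"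
  shows "LPF T \<rho> i = rlce T j i"
proof (rule antisym)
  show "rlce T j i \<le> LPF T \<rho> i" using rlce_le_LPF j pred by simp
  have "\<rho> i \<noteq> 1" using pred rank_in_range[OF j] by auto
  then obtain p where p: "p \<in> {1..length T}" "\<rho> p < \<rho> i" "LPF T \<rho> i = rlce T p i"
    using LPF_attained i by blast
  have "rlce T p i \<le> rlce T j i"
  proof (cases "p = j")
    case False
    then have "\<rho> p \<noteq> \<rho> j" using bij_rank p(1) j by (auto simp: bij_betw_def inj_on_eq_iff)
    then have "\<rho> p < \<rho> j" using p(2) pred by auto
    then have "R (suf T p) (suf T j)" "R (suf T j) (suf T i)"
      using rank_less_iff[OF p(1) j] rank_less_iff[OF j i] pred by auto
    then show ?thesis unfolding rlce_def by (rule lcp_le_if_R_between)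
  qed simp
  then show "LPF T \<rho> i \<le> rlce T j i" using p(3) by simp
qed

lemma LPF_le_Suc_LPF_Suc:
  assumes i: "1 \<le> i" "i < length T"
  shows "LPF T \<rho> i \<le> Suc (LPF T \<rho> (i + 1))"
proof (cases "\<rho> i = 1")
  case False
  have "i \<in> {1..length T}" using i by simp
  then obtain p where p: "p \<in> {1..length T}" "\<rho> p < \<rho> i" "LPF T \<rho> i = rlce T p i"
    using LPF_attained False by blast
  show ?thesis
  proof (cases "p < length T \<and> chr T p = chr T i")
    case True
    then have "rlce T p i = Suc (rlce T (p + 1) (i + 1))"
      using rlce_Cons p(1) i by simp
    moreover have "\<rho> (p + 1) < \<rho> (i + 1)"
      using rank_less_iff_rank_Suc_less p True i by auto
    ultimately show ?thesis
      using rlce_le_LPF[of "p + 1" "i + 1"] p(1,3) True by simp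
  next
    case False
    then have "rlce T p i = 0"
      using rlce_Cons rlce_length p(1) i by (cases "p = length T") auto
    then show ?thesis using p(3) by simp
  qed
qed (simp add: LPF_def)

lemma LPF_eq_Suc_LPF_Suc:
  assumes i: "1 \<le> i" "i < length T" and j: "1 \<le> j" "j < length T"
    and pred: "\<rho> (j + 1) + 1 = \<rho> (i + 1)" and chr_eq: "chr T j = chr T i"
  shows "LPF T \<rho> i = Suc (LPF T \<rho> (i + 1))"
proof (rule antisym[OF LPF_le_Suc_LPF_Suc[OF i]])
  have "Suc (LPF T \<rho> (i + 1)) = Suc (rlce T (j + 1) (i + 1))"
    using LPF_eq_rlce_pred pred i j by simp
  also have "\<dots> = rlce T j i"
    using rlce_Cons i j chr_eq by simp
  also have "\<dots> \<le> LPF T \<rho> i"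
    using rlce_le_LPF rank_less_iff_rank_Suc_less[OF j i chr_eq] pred j by simp
  finally show "Suc (LPF T \<rho> (i + 1)) \<le> LPF T \<rho> i" .
qed

lemma card_PDA_le_breaks: "card (PDA T \<rho>) \<le> card (breaks {1..length T} \<rho> (prev_chr T))"
proof -
  define v where "v i = i + LPF T \<rho> i" for i
  let ?B = "breaks {1..length T} \<rho> (prev_chr T)"
  have v_eq: "v i = v (i + 1)" if i: "1 \<le> i" "i < length T" and "i + 1 \<notin> ?B" for i
  proof -
    obtain j where j: "j \<in> {1..length T}" "\<rho> j + 1 = \<rho> (i + 1)" "prev_chr T j = prev_chr T (i + 1)"
      using \<open>i + 1 \<notin> ?B\<close> i by (auto simp: breaks_def)
    have "prev_chr T (i + 1) = chr T i"
      using i by (simp add: prev_chr_def)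
    moreover have "chr T i \<noteq> last T"
      using chr_ne_last i by simp
    ultimately have "j \<noteq> 1" "chr T (j - 1) = chr T i"
      using j(3) by (auto simp: prev_chr_def split: if_splits)
    then have "LPF T \<rho> i = Suc (LPF T \<rho> (i + 1))"
      using LPF_eq_Suc_LPF_Suc[of i "j - 1"] i j(1,2) by auto
    then show ?thesis by (simp add: v_def)
  qed
  have one_break: "1 \<in> ?B"
    using T_not_Nil bij_rank prev_chr_eq_last_iff
    by (auto simp: breaks_def prev_chr_def bij_betw_def Suc_leI)
  have reach_break: "\<exists>h \<in> ?B. v h = v i" if "1 \<le> i" "i \<le> length T" for i
    using that
  proof (induction i rule: nat_induct_at_least)
    case (Suc i)
    then show ?case using v_eq[of i] by (cases "Suc i \<in> ?B") auto
  qed (use one_break in blast)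
  have "PDA T \<rho> = v ` {1..length T}"
    by (auto simp: PDA_def v_def)
  also have "\<dots> \<subseteq> v ` ?B"
  proof (rule image_subsetI)
    fix i assume "i \<in> {1..length T}"
    then obtain h where "h \<in> ?B" "v h = v i" using reach_break by auto
    then show "v i \<in> v ` ?B" by (metis image_eqI)
  qed
  finally have "PDA T \<rho> \<subseteq> v ` ?B" .
  moreover have "finite ?B" by (simp add: breaks_def)
  ultimately show ?thesis
    using card_image_le card_mono le_trans by (metis finite_imageI)
qed

end

context sentinel_text
begin

lemma suffix_ranking_ISA: "suffix_ranking T (ISA T) (<)"
proof unfold_locales
  show "bij_betw (ISA T) {1..length T} {1..length T}" by (rule bij_ISA)
next
  fix xs ys zs :: "nat list" assume "xs < ys" "ys < zs"
  then show "lcp xs zs \<le> lcp ys zs" using lcp_le_if_between[of xs ys zs] by simp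
qed (simp_all add: ISA_less_iff)

lemma suffix_ranking_reverse_ISA: "suffix_ranking T (\<lambda>i. length T - ISA T i + 1) (>)"
proof unfold_locales
  have "bij_betw (\<lambda>k. length T - k + 1) {1..length T} {1..length T}"
    by (rule bij_betw_byWitness[where f' = "\<lambda>k. length T - k + 1"]) auto
  then show "bij_betw (\<lambda>i. length T - ISA T i + 1) {1..length T} {1..length T}"
    using bij_betw_trans[OF bij_ISA] by (simp add: comp_def)
next
  fix i j assume "i \<in> {1..length T}" "j \<in> {1..length T}"
  then show "length T - ISA T i + 1 < length T - ISA T j + 1 \<longleftrightarrow> suf T j < suf T i"
    using ISA_in_range[of i] ISA_in_range[of j] ISA_less_iff[of j i] by auto
next
  fix xs ys zs :: "nat list" assume "ys < xs" "zs < ys"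
  then show "lcp xs zs \<le> lcp ys zs"
    using lcp_le_if_between[of zs ys xs] by (simp add: lcp_sym)
qed simp

lemma card_PDA_ISA_le_runs: "card (PDA T (ISA T)) \<le> runs (BWT T)"
proof -
  interpret suffix_ranking T "ISA T" "(<)" by (rule suffix_ranking_ISA)
  have "card (breaks {1..length T} (ISA T) (prev_chr T)) \<le> runs (BWT T)"
    using bij_ISA BWT_nth_ISA by (intro card_breaks_le_runs) (simp_all add: length_BWT)
  then show ?thesis using card_PDA_le_breaks by simp
qed

lemma card_PDA_reverse_ISA_le_runs: "card (PDA T (\<lambda>i. length T - ISA T i + 1)) \<le> runs (BWT T)"
proof -
  interpret suffix_ranking T "\<lambda>i. length T - ISA T i + 1" "(>)"
    by (rule suffix_ranking_reverse_ISA)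
  have "rev (BWT T) ! (length T - ISA T i + 1 - 1) = prev_chr T i" if "i \<in> {1..length T}" for i
    using that ISA_in_range[OF that] BWT_nth_ISA[OF that] by (auto simp: rev_nth length_BWT)
  then have "card (breaks {1..length T} (\<lambda>i. length T - ISA T i + 1) (prev_chr T)) \<le> runs (rev (BWT T))"
    using bij_rank by (intro card_breaks_le_runs) (simp_all add: length_BWT)
  then show ?thesis using card_PDA_le_breaks by (simp add: runs_rev)
qed

end

theorem lemma17:
  fixes T :: "nat list"
  assumes "is_text T"
  defines "n \<equiv> length T"
  defines "\<pi> \<equiv> (\<lambda>i. ISA T i)"
  defines "\<pi>bar \<equiv> (\<lambda>i. n - ISA T i + 1)"
  defines "r \<equiv> runs (BWT T)"
  shows "order_preserving T \<pi> \<and> order_preserving T \<pi>bar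
         \<and> card (PDA T \<pi>) \<le> r \<and> card (PDA T \<pi>bar) \<le> r"
proof -
  interpret sentinel_text T by unfold_locales (rule assms(1))
  show ?thesis
    unfolding \<pi>_def \<pi>bar_def n_def r_def
    using suffix_ranking.order_preserving_rank[OF suffix_ranking_ISA]
      suffix_ranking.order_preserving_rank[OF suffix_ranking_reverse_ISA]
      card_PDA_ISA_le_runs card_PDA_reverse_ISA_le_runs
    by simp
qed

end
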